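(* Let $G$ be a finite group, $H$ a subgroup of $G$ and $N$ a normal subgroup of $G$ with $NH=G$. Let $p$ be a prime dividing both $(G:H)$ and $(G:N)$, and let $P$ be a $p$-Sylow subgroup of $G$. If $g\in G$ satisfies $\mathrm{ord}_p(P:P\cap gHg^{-1})=\mathrm{ord}_p(G:H)$, then $(P\cap N)\cdot(P\cap gHg^{-1})=P$.
   Context: $\mathrm{ord}_p$ denotes the exponent of the prime $p$ in a positive integer. *)

theory Defs
  imports "HOL-Algebra.Algebra" "HOL-Computational_Algebra.Primes"
begin

definition grp_index :: "('a, 'b) monoid_scheme \<Rightarrow> 'a set \<Rightarrow> nat" where
  "grp_index G H = card (rcosets\<^bsub>G\<^esub> H)"

definition is_sylow :: "('a, 'b) monoid_scheme \<Rightarrow> nat \<Rightarrow> 'a set \<Rightarrow> bool" where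
  "is_sylow G p P \<longleftrightarrow> subgroup P G \<and> card P = p ^ multiplicity p (order G)"

end

theory Submission
  imports Defs
begin

text \<open>
  Write \<open>v(S)\<close> for the exponent of \<open>p\<close> in \<open>|S|\<close>, and put \<open>K = gHg\<^sup>-\<^sup>1\<close>, \<open>A = P \<inter> N\<close>,
  \<open>B = P \<inter> K\<close>. The product formula \<open>|XY| |X \<inter> Y| = |X| |Y|\<close> for subgroups does all the work:
  applied to the subgroup \<open>NP\<close> it gives \<open>v(A) \<ge> v(N)\<close>; applied to \<open>NK = G\<close> it gives
  \<open>v(G) + v(N \<inter> K) = v(N) + v(K)\<close>; and the hypothesis says exactly \<open>v(B) = v(K)\<close>.
  Since \<open>A \<inter> B \<le> N \<inter> K\<close>, applying it once more to \<open>A\<close> and \<open>B\<close> yields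
  \<open>v(AB) \<ge> v(N) + v(K) - v(N \<inter> K) = v(G)\<close>, so the subset \<open>AB\<close> of \<open>P\<close> is all of \<open>P\<close>.
\<close>

lemma (in group) card_set_mult_fiber:
  assumes A: "subgroup A G" and B: "subgroup B G" and a0: "a0 \<in> A" and b0: "b0 \<in> B"
  shows "card {(a, b) \<in> A \<times> B. a \<otimes> b = a0 \<otimes> b0} = card (A \<inter> B)"
proof -
  have AG: "A \<subseteq> carrier G" and BG: "B \<subseteq> carrier G"
    using A B subgroup.subset by auto
  have a0G: "a0 \<in> carrier G" and b0G: "b0 \<in> carrier G"
    using a0 b0 AG BG by auto
  have to_fiber: "a0 \<otimes> c \<in> A \<and> inv c \<otimes> b0 \<in> B \<and> a0 \<otimes> c \<otimes> (inv c \<otimes> b0) = a0 \<otimes> b0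
      \<and> inv a0 \<otimes> (a0 \<otimes> c) = c"
    if "c \<in> A" "c \<in> B" for c
  proof -
    have "c \<in> carrier G" using that AG by blast
    then show ?thesis using that A B a0 b0 a0G b0G
      by (simp add: subgroup.m_closed subgroup.m_inv_closed m_assoc[symmetric]) (simp add: m_assoc)
  qed
  have from_fiber: "inv a0 \<otimes> a \<in> A \<and> inv a0 \<otimes> a \<in> B
      \<and> a0 \<otimes> (inv a0 \<otimes> a) = a \<and> inv (inv a0 \<otimes> a) \<otimes> b0 = b"
    if "a \<in> A" "b \<in> B" "a \<otimes> b = a0 \<otimes> b0" for a b
  proof -
    have aG: "a \<in> carrier G" and bG: "b \<in> carrier G" using that AG BG by blast+
    have "b0 = inv a0 \<otimes> (a \<otimes> b)" using that aG bG a0G b0G by (simp add: inv_solve_left)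
    then have shift: "inv a0 \<otimes> a = b0 \<otimes> inv b"
      using aG bG a0G b0G by (simp add: inv_solve_right m_assoc)
    have "inv a0 \<otimes> a \<in> A"
      using that A a0 by (simp add: subgroup.m_closed subgroup.m_inv_closed)
    moreover have "inv a0 \<otimes> a \<in> B"
      unfolding shift using that B b0 by (simp add: subgroup.m_closed subgroup.m_inv_closed)
    moreover have "a0 \<otimes> (inv a0 \<otimes> a) = a"
      using aG a0G by (simp add: m_assoc[symmetric])
    moreover have "inv (inv a0 \<otimes> a) \<otimes> b0 = b"
      unfolding shift using bG b0G by (simp add: inv_mult_group m_assoc)
    ultimately show ?thesis by blast
  qed
  have "bij_betw (\<lambda>(a, b). inv a0 \<otimes> a) {(a, b) \<in> A \<times> B. a \<otimes> b = a0 \<otimes> b0} (A \<inter> B)"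
    by (rule bij_betw_byWitness[where f' = "\<lambda>c. (a0 \<otimes> c, inv c \<otimes> b0)"])
      (use to_fiber from_fiber in auto)
  then show ?thesis
    by (rule bij_betw_same_card)
qed

lemma (in group) card_set_mult_mult_card_Int:
  assumes A: "subgroup A G" and B: "subgroup B G" and fin: "finite A" "finite B"
  shows "card (A <#> B) * card (A \<inter> B) = card A * card B"
proof -
  let ?m = "\<lambda>(a, b). a \<otimes> b"
  have image: "?m ` (A \<times> B) = A <#> B"
    unfolding set_mult_def by auto
  have "finite (A <#> B)"
    unfolding image[symmetric] using fin by simp
  have "card A * card B = card (A \<times> B)"
    by (simp add: card_cartesian_product)
  also have "\<dots> = (\<Sum>x \<in> A <#> B. card {y \<in> A \<times> B. ?m y = x})"
    using sum.group[of "A \<times> B" "A <#> B" ?m "\<lambda>_. 1::nat"] fin image \<open>finite (A <#> B)\<close>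
    by simp
  also have "\<dots> = (\<Sum>x \<in> A <#> B. card (A \<inter> B))"
  proof (rule sum.cong)
    fix x assume "x \<in> A <#> B"
    then obtain a0 b0 where "a0 \<in> A" "b0 \<in> B" "x = a0 \<otimes> b0"
      unfolding set_mult_def by blast
    then show "card {y \<in> A \<times> B. ?m y = x} = card (A \<inter> B)"
      using card_set_mult_fiber[OF A B] by (simp add: case_prod_beta' mem_Times_iff)
  qed simp
  finally show ?thesis
    by simp
qed

lemma multiplicity_add_eq_of_mult_eq:
  fixes a b c d :: nat
  assumes "Factorial_Ring.prime p" "a * b = c * d" "a \<noteq> 0" "b \<noteq> 0" "c \<noteq> 0" "d \<noteq> 0"
  shows "multiplicity p a + multiplicity p b = multiplicity p c + multiplicity p d"
  using assms by (metis prime_elem_multiplicity_mult_distrib prime_imp_prime_elem)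

lemma (in group) multiplicity_card_set_mult:
  assumes fin: "finite (carrier G)" and p: "Factorial_Ring.prime p"
    and A: "subgroup A G" and B: "subgroup B G"
  shows "multiplicity p (card (A <#> B)) + multiplicity p (card (A \<inter> B))
       = multiplicity p (card A) + multiplicity p (card B)"
proof (rule multiplicity_add_eq_of_mult_eq[OF p])
  have "finite A" "finite B"
    using A B fin finite_subset subgroup.subset by metis+
  then show eq: "card (A <#> B) * card (A \<inter> B) = card A * card B"
    by (rule card_set_mult_mult_card_Int[OF A B])
  show "card A \<noteq> 0" "card B \<noteq> 0" "card (A \<inter> B) \<noteq> 0"
    using A B subgroups_Inter_pair[OF A B] fin subgroup.finite_imp_card_positive by blast+
  then show "card (A <#> B) \<noteq> 0"
    using eq by (metis mult_is_0)
qed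

lemma (in group) card_subgroup_dvd:
  assumes S: "subgroup S G" and T: "subgroup T G" and "S \<subseteq> T"
  shows "card S dvd card T"
proof -
  have "card (rcosets\<^bsub>G\<lparr>carrier := T\<rparr>\<^esub> S) * card S = card T"
    using group.lagrange[OF subgroup_imp_group[OF T] subgroup_incl[OF S T \<open>S \<subseteq> T\<close>]]
    by (simp add: order_def)
  then show ?thesis
    by (metis dvd_triv_right)
qed

lemma (in group) multiplicity_card_subgroup_mono:
  assumes "finite (carrier G)" and S: "subgroup S G" and T: "subgroup T G" and "S \<subseteq> T"
  shows "multiplicity p (card S) \<le> multiplicity p (card T)"
  using card_subgroup_dvd[OF S T \<open>S \<subseteq> T\<close>]
    subgroup.finite_imp_card_positive[OF T \<open>finite (carrier G)\<close>]
  by (simp add: dvd_imp_multiplicity_le)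

lemma multiplicity_card_sylow:
  assumes "Factorial_Ring.prime p" "is_sylow G p P"
  shows "multiplicity p (card P) = multiplicity p (order G)"
  using assms by (simp add: is_sylow_def multiplicity_prime_power)

lemma (in group) multiplicity_index_add_multiplicity_card:
  assumes "finite (carrier G)" "Factorial_Ring.prime p" "subgroup H G"
  shows "multiplicity p (grp_index G H) + multiplicity p (card H) = multiplicity p (order G)"
proof -
  have "grp_index G H * card H = order G" "order G \<noteq> 0"
    using lagrange[OF \<open>subgroup H G\<close>] assms(1) order_gt_0_iff_finite
    by (auto simp: grp_index_def)
  then show ?thesis
    using \<open>Factorial_Ring.prime p\<close>
    by (metis mult_eq_0_iff prime_elem_multiplicity_mult_distrib prime_imp_prime_elem)
qed

lemma (in group) subgroup_conjugate:
  assumes "g \<in> carrier G" "subgroup H G"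
  shows "subgroup (g <# H #> inv g) G"
  using subgroup_conjugation_is_surj1[of "inv g" H] assms by simp

lemma (in group) card_conjugate:
  assumes "g \<in> carrier G" "H \<subseteq> carrier G"
  shows "card (g <# H #> inv g) = card H"
proof -
  have "g <# H #> inv g = (\<lambda>h. g \<otimes> h \<otimes> inv g) ` H"
    unfolding l_coset_def r_coset_def by auto
  moreover have "inj_on (\<lambda>h. g \<otimes> h \<otimes> inv g) H"
    using assms conjugation_is_inj by (meson inj_onI subsetD)
  ultimately show ?thesis
    by (simp add: card_image)
qed

lemma (in group) grp_index_conjugate:
  assumes "finite (carrier G)" "g \<in> carrier G" "subgroup H G"
  shows "grp_index G (g <# H #> inv g) = grp_index G H"
proof -
  have "grp_index G (g <# H #> inv g) * card H = grp_index G H * card H"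
    using lagrange[OF subgroup_conjugate[OF assms(2,3)]] lagrange[OF assms(3)]
      card_conjugate[OF assms(2) subgroup.subset[OF assms(3)]]
    by (simp add: grp_index_def)
  then show ?thesis
    using subgroup.finite_imp_card_positive[OF assms(3,1)] by simp
qed

lemma (in group) set_mult_conjugate_eq_carrier:
  assumes N: "N \<lhd> G" and NH: "N <#> H = carrier G"
    and H: "subgroup H G" and g: "g \<in> carrier G"
  shows "N <#> (g <# H #> inv g) = carrier G"
proof -
  have NG: "N \<subseteq> carrier G" and HG: "H \<subseteq> carrier G"
    using N H normal_imp_subgroup subgroup.subset by blast+
  have "N <#> (g <# H #> inv g) = ((N #> g) <#> H) #> inv g"
    using NG HG g by (simp add: setmult_rcos_assoc rcos_assoc_lcos l_coset_subset_G)
  also have "\<dots> = (g <# (N <#> H)) #> inv g"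
    using NG HG g normal.coset_eq[OF N] by (simp add: setmult_lcos_assoc)
  also have "\<dots> = carrier G"
    using g by (simp add: NH coset_join2 coset_join3 subgroup_self)
  finally show ?thesis .
qed

lemma (in group) multiplicity_card_normal_le:
  assumes fin: "finite (carrier G)" and p: "Factorial_Ring.prime p"
    and N: "N \<lhd> G" and P: "is_sylow G p P"
  shows "multiplicity p (card N) \<le> multiplicity p (card (P \<inter> N))"
proof -
  have PG: "subgroup P G"
    using P by (simp add: is_sylow_def)
  have NG: "subgroup N G"
    using N normal_imp_subgroup by blast
  have NP: "subgroup (N <#> P) G"
    using second_isomorphism_grp.normal_set_mult_subgroup PG N
    unfolding second_isomorphism_grp_def second_isomorphism_grp_axioms_def by blast
  have "multiplicity p (card (N <#> P)) \<le> multiplicity p (order G)"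
    using multiplicity_card_subgroup_mono[OF fin NP subgroup_self] subgroup.subset[OF NP]
    by (simp add: order_def)
  then show ?thesis
    using multiplicity_card_set_mult[OF fin p NG PG] multiplicity_card_sylow[OF p P]
    by (simp add: Int_commute)
qed

lemma (in group) multiplicity_card_Int_sylow:
  assumes fin: "finite (carrier G)" and p: "Factorial_Ring.prime p"
    and P: "is_sylow G p P" and K: "subgroup K G"
    and index: "multiplicity p (grp_index (G\<lparr>carrier := P\<rparr>) (P \<inter> K))
      = multiplicity p (grp_index G K)"
  shows "multiplicity p (card (P \<inter> K)) = multiplicity p (card K)"
proof -
  have PG: "subgroup P G"
    using P by (simp add: is_sylow_def)
  have "subgroup (P \<inter> K) (G\<lparr>carrier := P\<rparr>)"
    using subgroup_incl[OF subgroups_Inter_pair[OF PG K] PG] by blast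
  then have "multiplicity p (grp_index (G\<lparr>carrier := P\<rparr>) (P \<inter> K))
      + multiplicity p (card (P \<inter> K)) = multiplicity p (card P)"
    using group.multiplicity_index_add_multiplicity_card[OF subgroup_imp_group[OF PG]] fin p
      finite_subset[OF subgroup.subset[OF PG]] by (simp add: order_def)
  then show ?thesis
    using multiplicity_index_add_multiplicity_card[OF fin p K] multiplicity_card_sylow[OF p P] index
    by linarith
qed

lemma (in group) subset_sylow_eq:
  assumes fin: "finite (carrier G)" and P: "is_sylow G p P"
    and QP: "Q \<subseteq> P" and Q: "Q \<noteq> {}"
    and le: "multiplicity p (order G) \<le> multiplicity p (card Q)"
  shows "Q = P"
proof (rule card_seteq)
  have PG: "subgroup P G" and cardP: "card P = p ^ multiplicity p (order G)"
    using P by (auto simp: is_sylow_def)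
  show "finite P"
    using fin finite_subset subgroup.subset[OF PG] by blast
  then have "card Q \<noteq> 0"
    using QP Q finite_subset by fastforce
  then show "card P \<le> card Q"
    unfolding cardP using le by (simp add: dvd_imp_le multiplicity_dvd')
qed (rule QP)

theorem lemma5p2:
  fixes G :: "('a, 'b) monoid_scheme" and H N P :: "'a set" and p :: nat and g :: 'a
  assumes "group G" and "finite (carrier G)"
    and "subgroup H G" and "N \<lhd> G"
    and "N <#>\<^bsub>G\<^esub> H = carrier G"
    and "Factorial_Ring.prime p" and "p dvd grp_index G H" and "p dvd grp_index G N"
    and "is_sylow G p P"
    and "g \<in> carrier G"
    and "multiplicity p (grp_index (G\<lparr>carrier := P\<rparr>) (P \<inter> ((g <#\<^bsub>G\<^esub> H) #>\<^bsub>G\<^esub> inv\<^bsub>G\<^esub> g)))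
         = multiplicity p (grp_index G H)"
  shows "(P \<inter> N) <#>\<^bsub>G\<^esub> (P \<inter> ((g <#\<^bsub>G\<^esub> H) #>\<^bsub>G\<^esub> inv\<^bsub>G\<^esub> g)) = P"
proof -
  interpret group G by fact
  note fin = \<open>finite (carrier G)\<close> and p = \<open>Factorial_Ring.prime p\<close>
    and sylow = \<open>is_sylow G p P\<close> and g = \<open>g \<in> carrier G\<close> and H = \<open>subgroup H G\<close>
  define K where "K = (g <#\<^bsub>G\<^esub> H) #>\<^bsub>G\<^esub> inv\<^bsub>G\<^esub> g"
  define v where "v S = multiplicity p (card S)" for S :: "'a set"
  have P: "subgroup P G"
    using sylow by (simp add: is_sylow_def)
  have N: "subgroup N G"
    using \<open>N \<lhd> G\<close> normal_imp_subgroup by blast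
  have K: "subgroup K G"
    unfolding K_def using subgroup_conjugate[OF g H] .
  have "v N \<le> v (P \<inter> N)"
    unfolding v_def using multiplicity_card_normal_le[OF fin p \<open>N \<lhd> G\<close> sylow] .
  moreover have "v (P \<inter> K) = v K"
    using multiplicity_card_Int_sylow[OF fin p sylow K] assms(11) grp_index_conjugate[OF fin g H]
    unfolding v_def K_def by simp
  moreover have "multiplicity p (order G) + v (N \<inter> K) = v N + v K"
    using multiplicity_card_set_mult[OF fin p N K]
      set_mult_conjugate_eq_carrier[OF \<open>N \<lhd> G\<close> \<open>N <#>\<^bsub>G\<^esub> H = carrier G\<close> H g]
    unfolding v_def K_def by (simp add: order_def)
  moreover have "v ((P \<inter> N) \<inter> (P \<inter> K)) \<le> v (N \<inter> K)"
    unfolding v_def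
    by (rule multiplicity_card_subgroup_mono[OF fin]) (use subgroups_Inter_pair P N K in auto)
  moreover have "v ((P \<inter> N) <#>\<^bsub>G\<^esub> (P \<inter> K)) + v ((P \<inter> N) \<inter> (P \<inter> K))
      = v (P \<inter> N) + v (P \<inter> K)"
    unfolding v_def using multiplicity_card_set_mult[OF fin p] subgroups_Inter_pair P N K by blast
  ultimately have "multiplicity p (order G) \<le> v ((P \<inter> N) <#>\<^bsub>G\<^esub> (P \<inter> K))"
    by linarith
  moreover have "(P \<inter> N) <#>\<^bsub>G\<^esub> (P \<inter> K) \<subseteq> P"
    using mono_set_mult[of "P \<inter> N" P "P \<inter> K" P G] subgroup_mult_id[OF P] by blast
  moreover have "(P \<inter> N) <#>\<^bsub>G\<^esub> (P \<inter> K) \<noteq> {}"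
    using P N K by (auto simp: set_mult_def intro!: subgroup.one_closed)
  ultimately show ?thesis
    unfolding v_def K_def using subset_sylow_eq[OF fin sylow] by blast
qed

end
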